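(* Let $\mathfrak{g}_\alpha$, $-1\le\alpha\le1$, be the eight-dimensional real Lie algebras with basis $\{X_1,\dots,X_8\}$ and nonzero brackets $[X_1,X_2]=2X_2$, $[X_1,X_3]=-2X_3$, $[X_2,X_3]=X_1$, $[X_1,X_4]=X_4$, $[X_1,X_5]=-X_5$, $[X_1,X_6]=X_6$, $[X_1,X_7]=-X_7$, $[X_2,X_5]=X_4$, $[X_2,X_7]=X_6$, $[X_3,X_4]=X_5$, $[X_3,X_6]=X_7$, $[X_4,X_8]=X_4$, $[X_5,X_8]=X_5$, $[X_6,X_8]=\alpha X_6$, $[X_7,X_8]=\alpha X_7$. For every $-1<\alpha\le1$, the Lie algebra $\mathfrak{g}_{-1}$ is a linear deformation of $\mathfrak{g}_\alpha$. Moreover this deformation generates two non-constant invariants for the coadjoint representation, i.e. $\mathcal{N}(\mathfrak{g}_\alpha)=0$ while $\mathcal{N}(\mathfrak{g}_{-1})=2$.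
   Context: A linear deformation of a Lie algebra $\mathfrak{g}$ with bracket $[\cdot,\cdot]$ is a Lie algebra structure on the same vector space of the form $[X,Y]_t=[X,Y]+t\,\varphi(X,Y)$, with $t$ a scalar and $\varphi$ a skew-symmetric bilinear map (an integrable 2-cocycle with values in the adjoint module) such that $[\cdot,\cdot]_t$ satisfies the Jacobi identity. For a Lie algebra $\mathfrak{g}$ with basis $\{X_1,\dots,X_n\}$, structure constants $[X_i,X_j]=C_{ij}^kX_k$ and dual coordinates $x_1,\dots,x_n$, the number of functionally independent invariants of the coadjoint representation (solutions $F$ of the system $C_{ij}^k x_k\,\partial F/\partial x_j=0$, $1\le i\le n$) is $\mathcal{N}(\mathfrak{g})=\dim\mathfrak{g}-\operatorname{rank}(C_{ij}^kx_k)$, the rank being the generic rank of the antisymmetric matrix with entries $C_{ij}^kx_k$. *)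

theory Defs
  imports "Jordan_Normal_Form.DL_Rank"
begin

text \<open>The Lie algebras g_alpha (alpha real) with basis X_1,...,X_8, encoded by
  structure constants: sc a i j k is the coefficient of X_k in [X_i,X_j] for i < j
  (only the brackets listed in the paper are nonzero).\<close>

definition sc_upper :: "real \<Rightarrow> nat \<Rightarrow> nat \<Rightarrow> nat \<Rightarrow> real" where
  "sc_upper a i j k =
    (if (i,j,k) = (1,2,2) then 2
     else if (i,j,k) = (1,3,3) then -2
     else if (i,j,k) = (2,3,1) then 1
     else if (i,j,k) = (1,4,4) then 1
     else if (i,j,k) = (1,5,5) then -1
     else if (i,j,k) = (1,6,6) then 1
     else if (i,j,k) = (1,7,7) then -1
     else if (i,j,k) = (2,5,4) then 1
     else if (i,j,k) = (2,7,6) then 1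
     else if (i,j,k) = (3,4,5) then 1
     else if (i,j,k) = (3,6,7) then 1
     else if (i,j,k) = (4,8,4) then 1
     else if (i,j,k) = (5,8,5) then 1
     else if (i,j,k) = (6,8,6) then a
     else if (i,j,k) = (7,8,7) then a
     else 0)"

definition sc :: "real \<Rightarrow> nat \<Rightarrow> nat \<Rightarrow> nat \<Rightarrow> real" where
  "sc a i j k = (if i < j then sc_upper a i j k
                 else if j < i then - sc_upper a j i k else 0)"

abbreviation idx :: "nat set" where "idx \<equiv> {1..8}"

definition skew8 :: "(nat \<Rightarrow> nat \<Rightarrow> nat \<Rightarrow> real) \<Rightarrow> bool" where
  "skew8 D \<longleftrightarrow> (\<forall>i\<in>idx. \<forall>j\<in>idx. \<forall>k\<in>idx. D i j k = - D j i k)"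

definition jacobi8 :: "(nat \<Rightarrow> nat \<Rightarrow> nat \<Rightarrow> real) \<Rightarrow> bool" where
  "jacobi8 D \<longleftrightarrow> (\<forall>i\<in>idx. \<forall>j\<in>idx. \<forall>k\<in>idx. \<forall>m\<in>idx.
     (\<Sum>l\<in>idx. D i j l * D l k m + D j k l * D l i m + D k i l * D l j m) = 0)"

definition lie8 :: "(nat \<Rightarrow> nat \<Rightarrow> nat \<Rightarrow> real) \<Rightarrow> bool" where
  "lie8 D \<longleftrightarrow> skew8 D \<and> jacobi8 D"

definition linear_deformation8 ::
  "(nat \<Rightarrow> nat \<Rightarrow> nat \<Rightarrow> real) \<Rightarrow> (nat \<Rightarrow> nat \<Rightarrow> nat \<Rightarrow> real) \<Rightarrow> bool" where
  "linear_deformation8 D' D \<longleftrightarrow>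
     (\<exists>phi :: nat \<Rightarrow> nat \<Rightarrow> nat \<Rightarrow> real. skew8 phi \<and>
        (\<forall>t::real. lie8 (\<lambda>i j k. D i j k + t * phi i j k)) \<and>
        (\<exists>t::real. \<forall>i\<in>idx. \<forall>j\<in>idx. \<forall>k\<in>idx. D' i j k = D i j k + t * phi i j k))"

text \<open>The matrix (C_ij^k x_k)_{i,j} (0-based JNF indices, so entry (i,j) corresponds to X_{i+1},X_{j+1}).\<close>
definition coadj_mat :: "(nat \<Rightarrow> nat \<Rightarrow> nat \<Rightarrow> real) \<Rightarrow> (nat \<Rightarrow> real) \<Rightarrow> real mat" where
  "coadj_mat D x = mat 8 8 (\<lambda>(i,j). \<Sum>k\<in>idx. D (i+1) (j+1) k * x k)"

text \<open>Number of functionally independent coadjoint invariants: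
  dim g minus the generic (i.e. maximal) rank of (C_ij^k x_k).\<close>
definition Ninv :: "(nat \<Rightarrow> nat \<Rightarrow> nat \<Rightarrow> real) \<Rightarrow> nat" where
  "Ninv D = 8 - Max {vec_space.rank 8 (coadj_mat D x) | x. True}"

end

theory Submission
  imports Defs
begin

(* The structure constants of g_a depend affinely on a, with slope the skew map phi given by
   phi(X6,X8) = X6, phi(X7,X8) = X7. Since every g_a satisfies the Jacobi identity,
   g_a + t phi = g_(a+t) is a Lie algebra for every t, and g_(-1) = g_a + (-1-a) phi.

   At the covector xi with xi_4 = xi_7 = 1 and all other coordinates 0, a kernel vector v of
   (C_ij^k xi_k) satisfies (1+a) v_7 = (1+a) v_8 = 0, and then v = 0; so the matrix is
   invertible and N(g_a) = 0 for a <> -1. For a = -1 the Casimir invariants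
   C1 = x4 x7 - x5 x6 and C2 = (x4 x7 + x5 x6) x1 + 2 x2 x5 x7 - 2 x3 x4 x6 + C1 x8
   have gradients in the kernel; they are independent unless x4 = x5 = 0 or x6 = x7 = 0, and
   in those two cases two columns of the matrix vanish. So the rank is at most 6 everywhere,
   and it is 6 at xi: adding the matrix of phi, of rank at most 2, gives the invertible
   matrix of g_0 at xi. *)

declare One_nat_def [simp del] (* keeps the index 1 a numeral, so that sc_simps apply *)

lemma ball_idx: "(\<forall>i\<in>idx. P i) \<longleftrightarrow> P 1 \<and> P 2 \<and> P 3 \<and> P 4 \<and> P 5 \<and> P 6 \<and> P 7 \<and> P 8"
  by (auto simp: atLeastLessThanSuc_atLeastAtMost[symmetric] atLeastLessThan_nat_numeral)

lemma sum_idx: "(\<Sum>i\<in>idx. f i) = f 1 + f 2 + f 3 + f 4 + f 5 + f 6 + f 7 + f 8"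
  by (simp add: atLeastLessThanSuc_atLeastAtMost[symmetric] atLeastLessThan_nat_numeral add_ac)

lemma lessThan_8: "{..<8::nat} = {0, 1, 2, 3, 4, 5, 6, 7}"
  by (simp add: lessThan_nat_numeral One_nat_def lessThan_Suc insert_commute)

lemma all_less_8: "(\<forall>r<8::nat. P r) \<longleftrightarrow> P 0 \<and> P 1 \<and> P 2 \<and> P 3 \<and> P 4 \<and> P 5 \<and> P 6 \<and> P 7"
  by (metis lessThan_8 lessThan_iff insert_iff empty_iff)

lemma sum_less_8: "(\<Sum>r<8::nat. f r) = f 0 + f 1 + f 2 + f 3 + f 4 + f 5 + f 6 + f 7"
  by (simp add: lessThan_8 add_ac)


section \<open>The Jacobi identity\<close>

definition jacobiator :: "(nat \<Rightarrow> nat \<Rightarrow> nat \<Rightarrow> real) \<Rightarrow> nat \<Rightarrow> nat \<Rightarrow> nat \<Rightarrow> nat \<Rightarrow> real" where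
  "jacobiator D i j k m = (\<Sum>l\<in>idx. D i j l * D l k m + D j k l * D l i m + D k i l * D l j m)"

lemma jacobiator_rotate: "jacobiator D j k i m = jacobiator D i j k m"
  unfolding jacobiator_def by (simp add: add_ac)

lemma jacobiator_swap:
  assumes "skew8 D" "i \<in> idx" "j \<in> idx" "k \<in> idx"
  shows "jacobiator D j i k m = - jacobiator D i j k m"
proof -
  have "jacobiator D j i k m =
      (\<Sum>l\<in>idx. - (D i j l * D l k m + D j k l * D l i m + D k i l * D l j m))"
    unfolding jacobiator_def
  proof (rule sum.cong)
    fix l assume "l \<in> idx"
    then have "D j i l = - D i j l" "D i k l = - D k i l" "D k j l = - D j k l"
      using assms unfolding skew8_def by blast+
    then show "D j i l * D l k m + D i k l * D l j m + D k j l * D l i m =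
        - (D i j l * D l k m + D j k l * D l i m + D k i l * D l j m)"
      by simp
  qed simp
  also have "\<dots> = - jacobiator D i j k m"
    unfolding jacobiator_def by (rule sum_negf)
  finally show ?thesis .
qed

lemma jacobiator_eq_0_if_sorted:
  assumes skew: "skew8 D" and ijk: "i \<in> idx" "j \<in> idx" "k \<in> idx"
    and sorted: "\<And>a b c. 1 \<le> a \<Longrightarrow> a < b \<Longrightarrow> b < c \<Longrightarrow> c \<le> 8 \<Longrightarrow> jacobiator D a b c m = 0"
  shows "jacobiator D i j k m = 0"
proof -
  have swap: "jacobiator D a b c m = - jacobiator D b a c m" if "a \<in> idx" "b \<in> idx" "c \<in> idx" for a b c
    using jacobiator_swap[OF skew that] by simp
  have rot: "jacobiator D a b c m = jacobiator D b c a m" for a b c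
    by (rule jacobiator_rotate[symmetric])
  consider "i = j" | "j = k" | "k = i" | "i < j" "j < k" | "i < k" "k < j" | "j < i" "i < k"
    | "j < k" "k < i" | "k < i" "i < j" | "k < j" "j < i"
    by linarith
  then show ?thesis
  proof cases
    case 1 then show ?thesis using swap[of i i k] ijk by simp
  next
    case 2 then show ?thesis using rot[of i j j] swap[of j j i] ijk by simp
  next
    case 3 then show ?thesis using rot[of i j i] rot[of j i i] swap[of i i j] ijk by simp
  next
    case 4 then show ?thesis using sorted[of i j k] ijk by simp
  next
    case 5 then show ?thesis using swap[of i j k] rot[of j i k] sorted[of i k j] ijk by simp
  next
    case 6 then show ?thesis using swap[of i j k] sorted[of j i k] ijk by simp
  next
    case 7 then show ?thesis using rot[of i j k] sorted[of j k i] ijk by simp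
  next
    case 8 then show ?thesis using rot[of i j k] rot[of j k i] sorted[of k i j] ijk by simp
  next
    case 9 then show ?thesis
      using swap[of i j k] rot[of j i k] rot[of i k j] sorted[of k j i] ijk by simp
  qed
qed

lemma jacobi8_if_sorted:
  assumes "skew8 D"
    and "\<And>i j k m. 1 \<le> i \<Longrightarrow> i < j \<Longrightarrow> j < k \<Longrightarrow> k \<le> 8 \<Longrightarrow> m \<in> idx \<Longrightarrow>
      jacobiator D i j k m = 0"
  shows "jacobi8 D"
  using jacobiator_eq_0_if_sorted[OF assms(1)] assms(2)
  unfolding jacobi8_def jacobiator_def by blast

lemma lie8_cong:
  assumes "\<And>i j k. i \<in> idx \<Longrightarrow> j \<in> idx \<Longrightarrow> k \<in> idx \<Longrightarrow> D i j k = E i j k"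
  shows "lie8 D \<longleftrightarrow> lie8 E"
proof -
  have "jacobiator D i j k m = jacobiator E i j k m"
    if "i \<in> idx" "j \<in> idx" "k \<in> idx" "m \<in> idx" for i j k m
    unfolding jacobiator_def using that by (intro sum.cong) (simp_all add: assms)
  then show ?thesis
    unfolding lie8_def skew8_def jacobi8_def jacobiator_def[symmetric] using assms by auto
qed


section \<open>The algebras g_a and their linear deformation\<close>

(* Evaluating sc through these rows is far cheaper for the simplifier than unfolding the
   if-chain of sc_upper; all numeric verifications below rely on it. *)
lemma sc_simps:
  "sc b 1 2 k = (if k = 2 then 2 else 0)" "sc b 1 3 k = (if k = 3 then - 2 else 0)"
  "sc b 1 4 k = (if k = 4 then 1 else 0)" "sc b 1 5 k = (if k = 5 then - 1 else 0)"
  "sc b 1 6 k = (if k = 6 then 1 else 0)" "sc b 1 7 k = (if k = 7 then - 1 else 0)"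
  "sc b 1 1 k = 0" "sc b 1 8 k = 0"
  "sc b 2 1 k = (if k = 2 then - 2 else 0)" "sc b 2 3 k = (if k = 1 then 1 else 0)"
  "sc b 2 5 k = (if k = 4 then 1 else 0)" "sc b 2 7 k = (if k = 6 then 1 else 0)"
  "sc b 2 2 k = 0" "sc b 2 4 k = 0" "sc b 2 6 k = 0" "sc b 2 8 k = 0"
  "sc b 3 1 k = (if k = 3 then 2 else 0)" "sc b 3 2 k = (if k = 1 then - 1 else 0)"
  "sc b 3 4 k = (if k = 5 then 1 else 0)" "sc b 3 6 k = (if k = 7 then 1 else 0)"
  "sc b 3 3 k = 0" "sc b 3 5 k = 0" "sc b 3 7 k = 0" "sc b 3 8 k = 0"
  "sc b 4 1 k = (if k = 4 then - 1 else 0)" "sc b 4 3 k = (if k = 5 then - 1 else 0)"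
  "sc b 4 8 k = (if k = 4 then 1 else 0)"
  "sc b 4 2 k = 0" "sc b 4 4 k = 0" "sc b 4 5 k = 0" "sc b 4 6 k = 0" "sc b 4 7 k = 0"
  "sc b 5 1 k = (if k = 5 then 1 else 0)" "sc b 5 2 k = (if k = 4 then - 1 else 0)"
  "sc b 5 8 k = (if k = 5 then 1 else 0)"
  "sc b 5 3 k = 0" "sc b 5 4 k = 0" "sc b 5 5 k = 0" "sc b 5 6 k = 0" "sc b 5 7 k = 0"
  "sc b 6 1 k = (if k = 6 then - 1 else 0)" "sc b 6 3 k = (if k = 7 then - 1 else 0)"
  "sc b 6 8 k = (if k = 6 then b else 0)"
  "sc b 6 2 k = 0" "sc b 6 4 k = 0" "sc b 6 5 k = 0" "sc b 6 6 k = 0" "sc b 6 7 k = 0"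
  "sc b 7 1 k = (if k = 7 then 1 else 0)" "sc b 7 2 k = (if k = 6 then - 1 else 0)"
  "sc b 7 8 k = (if k = 7 then b else 0)"
  "sc b 7 3 k = 0" "sc b 7 4 k = 0" "sc b 7 5 k = 0" "sc b 7 6 k = 0" "sc b 7 7 k = 0"
  "sc b 8 4 k = (if k = 4 then - 1 else 0)" "sc b 8 5 k = (if k = 5 then - 1 else 0)"
  "sc b 8 6 k = (if k = 6 then - b else 0)" "sc b 8 7 k = (if k = 7 then - b else 0)"
  "sc b 8 1 k = 0" "sc b 8 2 k = 0" "sc b 8 3 k = 0" "sc b 8 8 k = 0"
  by (simp_all add: sc_def sc_upper_def)

lemma sc_swap: "sc b j i k = - sc b i j k"
  unfolding sc_def by auto

lemma skew8_sc: "skew8 (sc b)"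
  unfolding skew8_def using sc_swap by blast

lemma jacobi8_sc: "jacobi8 (sc b)"
proof (rule jacobi8_if_sorted[OF skew8_sc])
  (* all quantifiers are expanded first, so that sc is only ever evaluated at numerals *)
  have "\<forall>k\<in>idx. \<forall>j\<in>{1..<k}. \<forall>i\<in>{1..<j}. \<forall>m\<in>idx. jacobiator (sc b) i j k m = 0"
    apply (simp add: ball_idx atLeastLessThan_nat_numeral)
    apply (intro conjI; unfold jacobiator_def sum_idx)
    apply (simp_all add: sc_simps)
    done
  then show "jacobiator (sc b) i j k m = 0"
    if "1 \<le> i" "i < j" "j < k" "k \<le> 8" "m \<in> idx" for i j k m
    using that by auto
qed

lemma lie8_sc: "lie8 (sc b)"
  unfolding lie8_def using skew8_sc jacobi8_sc by blast

definition deformation_cocycle :: "nat \<Rightarrow> nat \<Rightarrow> nat \<Rightarrow> real" where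
  "deformation_cocycle i j k = sc 1 i j k - sc 0 i j k"

lemma skew8_deformation_cocycle: "skew8 deformation_cocycle"
proof (unfold skew8_def, intro ballI)
  fix i j k
  show "deformation_cocycle i j k = - deformation_cocycle j i k"
    using sc_swap[of 1 i j k] sc_swap[of 0 i j k] by (simp add: deformation_cocycle_def)
qed

lemma sc_add_deformation_cocycle:
  assumes "i \<in> idx" "j \<in> idx" "k \<in> idx"
  shows "sc a i j k + t * deformation_cocycle i j k = sc (a + t) i j k"
proof -
  have "\<forall>i\<in>idx. \<forall>j\<in>idx. \<forall>k\<in>idx. sc a i j k + t * deformation_cocycle i j k = sc (a + t) i j k"
    unfolding ball_idx deformation_cocycle_def by (simp add: sc_simps algebra_simps)
  then show ?thesis using assms by blast
qed

lemma linear_deformation8_sc: "linear_deformation8 (sc b) (sc a)"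
proof -
  have "lie8 (\<lambda>i j k. sc a i j k + t * deformation_cocycle i j k)" for t
  proof -
    have "lie8 (\<lambda>i j k. sc a i j k + t * deformation_cocycle i j k) \<longleftrightarrow> lie8 (sc (a + t))"
      by (rule lie8_cong) (simp add: sc_add_deformation_cocycle)
    then show ?thesis using lie8_sc by blast
  qed
  moreover have "\<forall>i\<in>idx. \<forall>j\<in>idx. \<forall>k\<in>idx.
      sc b i j k = sc a i j k + (b - a) * deformation_cocycle i j k"
    by (simp add: sc_add_deformation_cocycle)
  ultimately show ?thesis
    unfolding linear_deformation8_def using skew8_deformation_cocycle by blast
qed


section \<open>Bounds on the rank of a matrix\<close>

lemma (in vec_space) rank_le_card_of_sum_of_products:
  assumes "A \<in> carrier_mat n nc" and "finite K"
    and "\<And>r c. r < n \<Longrightarrow> c < nc \<Longrightarrow> A $$ (r, c) = (\<Sum>k\<in>K. f k r * g k c)"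
  shows "rank A \<le> card K"
  using assms(2,1,3)
proof (induction K arbitrary: A rule: finite_induct)
  case empty
  then have "A = 0\<^sub>m n nc" by (intro eq_matI) auto
  then show ?case using rank_0I by simp
next
  case (insert k K)
  define B where "B = mat n nc (\<lambda>(r, c). \<Sum>k\<in>K. f k r * g k c)"
  define C where "C = mat n nc (\<lambda>(r, c). f k r * g k c)"
  have "A = B + C"
    using insert by (intro eq_matI) (auto simp: B_def C_def add.commute)
  have "rank B \<le> card K"
    by (rule insert.IH) (auto simp: B_def)
  moreover have "rank C \<le> 1"
    by (rule rank_le_1_product_entries[where f = "f k" and g = "g k"]) (auto simp: C_def)
  moreover have "rank (B + C) \<le> rank B + rank C"
    by (rule rank_subadditive) (auto simp: B_def C_def)
  ultimately show ?case using \<open>A = B + C\<close> insert.hyps by simp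
qed

lemma (in vec_space) rank_le_card_of_spanning_cols:
  assumes A: "A \<in> carrier_mat n nc" and K: "K \<subseteq> {..<nc}"
    and span: "\<And>c. c < nc \<Longrightarrow> c \<notin> K \<Longrightarrow> \<exists>h. \<forall>r<n. A $$ (r, c) = (\<Sum>k\<in>K. h k * A $$ (r, k))"
  shows "rank A \<le> card K"
proof -
  obtain h where h: "\<And>c r. c < nc \<Longrightarrow> c \<notin> K \<Longrightarrow> r < n \<Longrightarrow> A $$ (r, c) = (\<Sum>k\<in>K. h c k * A $$ (r, k))"
    using span by metis
  have "finite K" using K finite_subset by blast
  then show ?thesis
  proof (rule rank_le_card_of_sum_of_products[OF A, where f = "\<lambda>k r. A $$ (r, k)"
        and g = "\<lambda>k c. if c \<in> K then of_bool (k = c) else h c k"])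
    fix r c assume "r < n" "c < nc"
    show "A $$ (r, c) = (\<Sum>k\<in>K. A $$ (r, k) * (if c \<in> K then of_bool (k = c) else h c k))"
    proof (cases "c \<in> K")
      case True
      then have "(\<Sum>k\<in>K. A $$ (r, k) * (if c \<in> K then of_bool (k = c) else h c k)) =
          (\<Sum>k\<in>K. if k = c then A $$ (r, c) else 0)"
        by (intro sum.cong) auto
      also have "\<dots> = A $$ (r, c)"
        using True \<open>finite K\<close> by simp
      finally show ?thesis by simp
    next
      case False
      then show ?thesis using h \<open>r < n\<close> \<open>c < nc\<close> by (simp add: mult.commute)
    qed
  qed
qed

lemma entry_eq_sum_if_mult_vec_eq_0:
  fixes A :: "'a :: field mat"
  assumes A: "A \<in> carrier_mat n nc" and v: "v \<in> carrier_vec nc" "A *\<^sub>v v = 0\<^sub>v n"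
    and r: "r < n" and p: "p < nc" "v $ p \<noteq> 0" "p \<notin> K" and K: "K \<subseteq> {..<nc}"
    and supp: "\<And>k. k < nc \<Longrightarrow> k \<notin> insert p K \<Longrightarrow> v $ k = 0"
  shows "A $$ (r, p) = (\<Sum>k\<in>K. (- v $ k / v $ p) * A $$ (r, k))"
proof -
  have "finite K" using K finite_subset by blast
  have "0 = (A *\<^sub>v v) $ r" using v r A by simp
  also have "\<dots> = (\<Sum>k<nc. A $$ (r, k) * v $ k)"
    using A v(1) r by (simp add: scalar_prod_def lessThan_atLeast0)
  also have "\<dots> = (\<Sum>k\<in>insert p K. A $$ (r, k) * v $ k)"
    using K p supp by (intro sum.mono_neutral_right) auto
  also have "\<dots> = A $$ (r, p) * v $ p + (\<Sum>k\<in>K. A $$ (r, k) * v $ k)"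
    using \<open>finite K\<close> p by simp
  finally have "A $$ (r, p) = - (\<Sum>k\<in>K. A $$ (r, k) * v $ k) / v $ p"
    using p by (simp add: field_simps eq_neg_iff_add_eq_0)
  also have "\<dots> = (\<Sum>k\<in>K. (- v $ k / v $ p) * A $$ (r, k))"
    by (simp add: sum_divide_distrib sum_negf[symmetric] mult.commute)
  finally show ?thesis .
qed

lemma (in vec_space) rank_le_of_two_kernel_vecs:
  assumes A: "A \<in> carrier_mat n nc"
    and v: "v \<in> carrier_vec nc" "A *\<^sub>v v = 0\<^sub>v n" and w: "w \<in> carrier_vec nc" "A *\<^sub>v w = 0\<^sub>v n"
    and pq: "p < nc" "q < nc" "v $ p \<noteq> 0" "v $ q = 0" "w $ q \<noteq> 0"
  shows "rank A \<le> nc - 2"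
proof -
  define u where "u = w - (w $ p / v $ p) \<cdot>\<^sub>v v"
  have u_carrier: "u \<in> carrier_vec nc"
    using v w by (simp add: u_def)
  have "A *\<^sub>v u = 0\<^sub>v n - (w $ p / v $ p) \<cdot>\<^sub>v 0\<^sub>v n"
    using A v w by (simp add: u_def mult_minus_distrib_mat_vec mult_mat_vec)
  also have "\<dots> = 0\<^sub>v n"
    by (intro eq_vecI) simp_all
  finally have "A *\<^sub>v u = 0\<^sub>v n" .
  moreover have "u $ p = 0" "u $ q \<noteq> 0"
    using v w pq by (simp_all add: u_def)
  ultimately have u: "u \<in> carrier_vec nc" "A *\<^sub>v u = 0\<^sub>v n" "u $ p = 0" "u $ q \<noteq> 0"
    using u_carrier by blast+
  define K where "K = {..<nc} - {p, q}"
  have "p \<noteq> q" using pq by auto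
  have "rank A \<le> card K"
  proof (rule rank_le_card_of_spanning_cols[OF A])
    show "K \<subseteq> {..<nc}" by (auto simp: K_def)
    fix c assume "c < nc" "c \<notin> K"
    then have "c = p \<or> c = q" by (auto simp: K_def)
    then show "\<exists>h. \<forall>r<n. A $$ (r, c) = (\<Sum>k\<in>K. h k * A $$ (r, k))"
    proof
      assume "c = p"
      have "A $$ (r, p) = (\<Sum>k\<in>K. (- v $ k / v $ p) * A $$ (r, k))" if "r < n" for r
        by (rule entry_eq_sum_if_mult_vec_eq_0[OF A v that]) (use pq in \<open>auto simp: K_def\<close>)
      then show ?thesis using \<open>c = p\<close> by (intro exI[of _ "\<lambda>k. - v $ k / v $ p"]) simp
    next
      assume "c = q"
      have "A $$ (r, q) = (\<Sum>k\<in>K. (- u $ k / u $ q) * A $$ (r, k))" if "r < n" for r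
        by (rule entry_eq_sum_if_mult_vec_eq_0[OF A u(1,2) that]) (use pq u in \<open>auto simp: K_def\<close>)
      then show ?thesis using \<open>c = q\<close> by (intro exI[of _ "\<lambda>k. - u $ k / u $ q"]) simp
    qed
  qed
  moreover have "card K = nc - 2"
    using pq \<open>p \<noteq> q\<close> by (simp add: K_def card_Diff_subset)
  ultimately show ?thesis by simp
qed

lemma (in vec_space) rank_eq_if_kernel_trivial:
  assumes A: "A \<in> carrier_mat n n"
    and ker: "\<And>v. v \<in> carrier_vec n \<Longrightarrow> A *\<^sub>v v = 0\<^sub>v n \<Longrightarrow> v = 0\<^sub>v n"
  shows "rank A = n"
  using low_rank_det_zero[OF A] det_0_iff_vec_prod_zero_field[OF A] ker by blast


section \<open>The coadjoint matrices\<close>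

lemma coadj_mat_carrier [simp]: "coadj_mat D x \<in> carrier_mat 8 8"
  by (simp add: coadj_mat_def)

lemma coadj_mat_cong:
  assumes "\<And>i j k. i \<in> idx \<Longrightarrow> j \<in> idx \<Longrightarrow> k \<in> idx \<Longrightarrow> D i j k = E i j k"
  shows "coadj_mat D x = coadj_mat E x"
  unfolding coadj_mat_def using assms by (intro eq_matI) (auto intro!: sum.cong)

lemma coadj_mat_add: "coadj_mat (\<lambda>i j k. D i j k + E i j k) x = coadj_mat D x + coadj_mat E x"
  by (intro eq_matI) (simp_all add: coadj_mat_def sum.distrib algebra_simps)

lemma coadj_mat_mult_vec_eq_0_iff:
  assumes "v \<in> carrier_vec 8"
  shows "coadj_mat D x *\<^sub>v v = 0\<^sub>v 8 \<longleftrightarrow>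
    (\<forall>r<8. (\<Sum>c<8. (\<Sum>k\<in>idx. D (r + 1) (c + 1) k * x k) * v $ c) = 0)"
  using assms by (simp add: vec_eq_iff coadj_mat_def scalar_prod_def lessThan_atLeast0)

lemma Ninv_eqI:
  assumes "\<And>x. vec_space.rank 8 (coadj_mat D x) \<le> m" and "vec_space.rank 8 (coadj_mat D x0) = m"
  shows "Ninv D = 8 - m"
proof -
  have "Max {vec_space.rank 8 (coadj_mat D x) | x. True} = m"
  proof (rule Max_eqI)
    show "finite {vec_space.rank 8 (coadj_mat D x) | x. True}"
      by (rule finite_subset[of _ "{..m}"]) (use assms(1) in auto)
  qed (use assms in auto)
  then show ?thesis by (simp add: Ninv_def)
qed

definition xi47 :: "nat \<Rightarrow> real" where
  "xi47 k = (if k = 4 \<or> k = 7 then 1 else 0)"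

lemma rank_coadj_mat_sc_xi47:
  assumes "b \<noteq> -1"
  shows "vec_space.rank 8 (coadj_mat (sc b) xi47) = 8"
proof (rule vec_space.rank_eq_if_kernel_trivial[OF coadj_mat_carrier])
  fix v :: "real vec"
  assume v: "v \<in> carrier_vec 8" and "coadj_mat (sc b) xi47 *\<^sub>v v = 0\<^sub>v 8"
  then have row: "(\<Sum>c<8. (\<Sum>k\<in>idx. sc b (r + 1) (c + 1) k * xi47 k) * v $ c) = 0"
    if "r < 8" for r
    using v that by (simp add: coadj_mat_mult_vec_eq_0_iff)
  have eqs: "v $ 3 = v $ 6" "v $ 4 = 0" "v $ 5 = 0" "v $ 7 = v $ 0" "v $ 1 = 0" "v $ 2 = 0"
      "v $ 0 + b * v $ 7 = 0" "- v $ 3 = b * v $ 6"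
    using row[of 0] row[of 1] row[of 2] row[of 3] row[of 4] row[of 5] row[of 6] row[of 7]
    by (simp_all add: sum_less_8 sum_idx sc_simps xi47_def)
  have "(1 + b) * v $ 7 = 0" "(1 + b) * v $ 6 = 0"
    using eqs by (simp_all add: algebra_simps)
  moreover have "1 + b \<noteq> 0"
    using assms by simp
  ultimately have "v $ 7 = 0" "v $ 6 = 0"
    by simp_all
  with eqs have "\<forall>i<8. v $ i = 0"
    by (simp add: all_less_8)
  with v show "v = 0\<^sub>v 8"
    by (intro eq_vecI) auto
qed

(* Gradients of the Casimir invariants C1 and C2; entry i is the derivative along x_(i+1),
   matching the 0-based indexing of coadj_mat. *)
definition casimir1_grad :: "(nat \<Rightarrow> real) \<Rightarrow> real vec" where
  "casimir1_grad x = vec 8 (\<lambda>i. [0, 0, 0, x 7, - x 6, - x 5, x 4, 0] ! i)"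

definition casimir2_grad :: "(nat \<Rightarrow> real) \<Rightarrow> real vec" where
  "casimir2_grad x = vec 8 (\<lambda>i.
    [x 4 * x 7 + x 5 * x 6, 2 * x 5 * x 7, - 2 * x 4 * x 6,
     x 1 * x 7 - 2 * x 3 * x 6 + x 7 * x 8, x 1 * x 6 + 2 * x 2 * x 7 - x 6 * x 8,
     x 1 * x 5 - 2 * x 3 * x 4 - x 5 * x 8, x 1 * x 4 + 2 * x 2 * x 5 + x 4 * x 8,
     x 4 * x 7 - x 5 * x 6] ! i)"

lemma coadj_mat_mult_casimir1_grad: "coadj_mat (sc (-1)) x *\<^sub>v casimir1_grad x = 0\<^sub>v 8"
  by (simp add: coadj_mat_mult_vec_eq_0_iff all_less_8 sum_less_8 sum_idx sc_simps casimir1_grad_def)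

lemma coadj_mat_mult_casimir2_grad: "coadj_mat (sc (-1)) x *\<^sub>v casimir2_grad x = 0\<^sub>v 8"
  by (simp add: coadj_mat_mult_vec_eq_0_iff all_less_8 sum_less_8 sum_idx sc_simps casimir2_grad_def
      algebra_simps)

lemma coadj_mat_mult_unit_vec_if_x45:
  assumes "x 4 = 0" "x 5 = 0" "c \<in> {3, 4}"
  shows "coadj_mat (sc b) x *\<^sub>v unit_vec 8 c = 0\<^sub>v 8"
  using assms by (auto simp: coadj_mat_mult_vec_eq_0_iff all_less_8 sum_less_8 sum_idx sc_simps)

lemma coadj_mat_mult_unit_vec_if_x67:
  assumes "x 6 = 0" "x 7 = 0" "c \<in> {5, 6}"
  shows "coadj_mat (sc b) x *\<^sub>v unit_vec 8 c = 0\<^sub>v 8"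
  using assms by (auto simp: coadj_mat_mult_vec_eq_0_iff all_less_8 sum_less_8 sum_idx sc_simps)

lemma casimir2_grad_nonzero:
  assumes "x 4 \<noteq> 0 \<or> x 5 \<noteq> 0" and "x 6 \<noteq> 0 \<or> x 7 \<noteq> 0"
  shows "\<exists>q\<in>{0, 1, 2, 7}. casimir2_grad x $ q \<noteq> 0"
proof (rule ccontr)
  assume "\<not> ?thesis"
  then have "x 4 * x 7 + x 5 * x 6 = 0" "x 5 * x 7 = 0" "x 4 * x 6 = 0" "x 4 * x 7 - x 5 * x 6 = 0"
    by (auto simp: casimir2_grad_def)
  then have "x 4 * x 7 = 0" "x 5 * x 6 = 0" "x 5 * x 7 = 0" "x 4 * x 6 = 0"
    by linarith+
  then show False
    using assms by auto
qed

lemma rank_coadj_mat_sc_minus1_le: "vec_space.rank 8 (coadj_mat (sc (-1)) x) \<le> 6"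
proof -
  let ?A = "coadj_mat (sc (-1)) x"
  have kernel_pair: "vec_space.rank 8 ?A \<le> 6"
    if "v \<in> carrier_vec 8" "?A *\<^sub>v v = 0\<^sub>v 8" "w \<in> carrier_vec 8" "?A *\<^sub>v w = 0\<^sub>v 8"
      "p < 8" "q < 8" "v $ p \<noteq> 0" "v $ q = 0" "w $ q \<noteq> 0" for v w p q
    using vec_space.rank_le_of_two_kernel_vecs[OF coadj_mat_carrier that] by simp
  consider "x 4 = 0" "x 5 = 0" | "x 6 = 0" "x 7 = 0" | "x 4 \<noteq> 0 \<or> x 5 \<noteq> 0" "x 6 \<noteq> 0 \<or> x 7 \<noteq> 0"
    by blast
  then show ?thesis
  proof cases
    case 1
    then show ?thesis
      using kernel_pair[of "unit_vec 8 3" "unit_vec 8 4" 3 4] coadj_mat_mult_unit_vec_if_x45 by simp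
  next
    case 2
    then show ?thesis
      using kernel_pair[of "unit_vec 8 5" "unit_vec 8 6" 5 6] coadj_mat_mult_unit_vec_if_x67 by simp
  next
    case 3
    have "\<exists>p\<in>{3, 4, 5, 6}. casimir1_grad x $ p \<noteq> 0"
      using 3 by (auto simp: casimir1_grad_def)
    then obtain p where p: "p \<in> {3, 4, 5, 6}" "casimir1_grad x $ p \<noteq> 0" ..
    obtain q where q: "q \<in> {0, 1, 2, 7}" "casimir2_grad x $ q \<noteq> 0"
      using casimir2_grad_nonzero 3 by blast
    have "casimir1_grad x $ q = 0"
      using q(1) by (auto simp: casimir1_grad_def)
    moreover have "casimir1_grad x \<in> carrier_vec 8" "casimir2_grad x \<in> carrier_vec 8"
      by (simp_all add: casimir1_grad_def casimir2_grad_def)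
    moreover have "p < 8" "q < 8"
      using p(1) q(1) by auto
    ultimately show ?thesis
      using kernel_pair coadj_mat_mult_casimir1_grad coadj_mat_mult_casimir2_grad p(2) q(2)
      by blast
  qed
qed

lemma rank_coadj_mat_deformation_cocycle_le: "vec_space.rank 8 (coadj_mat deformation_cocycle x) \<le> 2"
proof -
  define u :: "nat \<Rightarrow> real" where "u r = (if r = 5 then x 6 else if r = 6 then x 7 else 0)" for r
  define e7 :: "nat \<Rightarrow> real" where "e7 r = (if r = 7 then 1 else 0)" for r
  have entries: "\<forall>r<8. \<forall>c<8. coadj_mat deformation_cocycle x $$ (r, c) = u r * e7 c - e7 r * u c"
    by (simp add: all_less_8 coadj_mat_def sum_idx deformation_cocycle_def sc_simps u_def e7_def)
  have "vec_space.rank 8 (coadj_mat deformation_cocycle x) \<le> card {0, 1 :: nat}"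
  proof (rule vec_space.rank_le_card_of_sum_of_products[OF coadj_mat_carrier,
        where f = "\<lambda>k r. if k = 0 then u r else - e7 r" and g = "\<lambda>k c. if k = 0 then e7 c else u c"])
    show "coadj_mat deformation_cocycle x $$ (r, c) =
        (\<Sum>k\<in>{0::nat, 1}. (if k = 0 then u r else - e7 r) * (if k = 0 then e7 c else u c))"
      if "r < 8" "c < 8" for r c
      using entries that by simp
  qed simp
  then show ?thesis by simp
qed

lemma rank_coadj_mat_sc_minus1_xi47: "vec_space.rank 8 (coadj_mat (sc (-1)) xi47) = 6"
proof (rule antisym)
  show "vec_space.rank 8 (coadj_mat (sc (-1)) xi47) \<le> 6"
    by (rule rank_coadj_mat_sc_minus1_le)
  have "coadj_mat (sc 0) xi47 = coadj_mat (\<lambda>i j k. sc (-1) i j k + deformation_cocycle i j k) xi47"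
    using sc_add_deformation_cocycle[where a = "-1" and t = 1] by (intro coadj_mat_cong) simp
  then have "coadj_mat (sc 0) xi47 = coadj_mat (sc (-1)) xi47 + coadj_mat deformation_cocycle xi47"
    by (simp add: coadj_mat_add)
  moreover have "vec_space.rank 8 (coadj_mat (sc (-1)) xi47 + coadj_mat deformation_cocycle xi47)
      \<le> vec_space.rank 8 (coadj_mat (sc (-1)) xi47) + vec_space.rank 8 (coadj_mat deformation_cocycle xi47)"
    by (rule vec_space.rank_subadditive[OF coadj_mat_carrier coadj_mat_carrier])
  ultimately have "8 \<le> vec_space.rank 8 (coadj_mat (sc (-1)) xi47) + vec_space.rank 8 (coadj_mat deformation_cocycle xi47)"
    using rank_coadj_mat_sc_xi47[of 0] by simp
  then show "6 \<le> vec_space.rank 8 (coadj_mat (sc (-1)) xi47)"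
    using rank_coadj_mat_deformation_cocycle_le[of xi47] by linarith
qed

theorem proposition2:
  shows "(\<forall>a::real. -1 < a \<and> a \<le> 1 \<longrightarrow>
            linear_deformation8 (sc (-1)) (sc a) \<and> Ninv (sc a) = 0)
         \<and> Ninv (sc (-1)) = 2"
proof -
  have "Ninv (sc a) = 0" if "a \<noteq> -1" for a
    using Ninv_eqI[OF vec_space.rank_le_nc[OF coadj_mat_carrier] rank_coadj_mat_sc_xi47[OF that]] by simp
  moreover have "Ninv (sc (-1)) = 2"
    using Ninv_eqI[OF rank_coadj_mat_sc_minus1_le rank_coadj_mat_sc_minus1_xi47] by simp
  ultimately show ?thesis
    using linear_deformation8_sc by auto
qed

end
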